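(* Let $\alpha,\beta,\bar\beta,\Delta,\bar\Delta\in\mathbb{C}$ with $(\Delta,\beta)\neq(0,0)$, $(\bar\Delta,\bar\beta)\neq(0,0)$ and $\bar\beta-\beta=1$. Consider extensions of conformal $\widetilde{\mathrm{SV}}$-modules $$0\to V(\alpha,\bar\beta,\bar\Delta)\to E\to V(\alpha,\beta,\Delta)\to0,$$ realized as $E=\mathbb{C}[\partial]v_{\bar\Delta}\oplus\mathbb{C}[\partial]v_\Delta$ with $\mathbb{C}[\partial]v_{\bar\Delta}\cong V(\alpha,\bar\beta,\bar\Delta)$ a submodule and $$L_\lambda v_\Delta=(\partial+\alpha+\Delta\lambda)v_\Delta+f(\partial,\lambda)v_{\bar\Delta},\ M_\lambda v_\Delta=g(\partial,\lambda)v_{\bar\Delta},\ N_\lambda v_\Delta=\beta v_\Delta+k(\partial,\lambda)v_{\bar\Delta},\ Y_\lambda v_\Delta=h(\partial,\lambda)v_{\bar\Delta},$$ with $f,g,h,k\in\mathbb{C}[\partial,\lambda]$. Nontrivial extensions of this form exist if and only if $\Delta-\bar\Delta=-\tfrac12$ or $(\Delta,\bar\Delta)=(\tfrac{\bar\beta+1}2,\tfrac{\bar\beta}2)$. In these cases they are given, up to equivalence, as follows (with $\bar\partial=\partial+\alpha$): (i) $\Delta-\bar\Delta=-\tfrac12$: $f=g=k=0$ and $h=a_0$ with $a_0\neq0$; (ii) $(\Delta,\bar\Delta)=(\tfrac{\bar\beta+1}2,\tfrac{\bar\beta}2)$: $f=g=k=0$ and $h=a_1(\bar\partial+\bar\beta\lambda)$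 with $a_1\neq0$. Furthermore, $\mathrm{Ext}(V(\alpha,\beta,\Delta),V(\alpha,\beta+1,\bar\Delta))$ is $1$-dimensional in cases (i) and (ii).
   Context: A conformal module over a Lie conformal algebra $R$ is a $\mathbb{C}[\partial]$-module $V$ with $a\mapsto a_\lambda\in\mathrm{End}_{\mathbb{C}}(V)\otimes\mathbb{C}[\lambda]$ satisfying $[a_\lambda,b_\mu]=[a_\lambda b]_{\lambda+\mu}$ and $(\partial a)_\lambda=[\partial,a_\lambda]=-\lambda a_\lambda$. $\widetilde{\mathrm{SV}}$ is the Lie conformal algebra that is the free $\mathbb{C}[\partial]$-module with basis $L,M,Y,N$ whose nonzero $\lambda$-brackets (up to skew-symmetry) are $[L_\lambda L]=(\partial+2\lambda)L$, $[L_\lambda Y]=(\partial+\tfrac32\lambda)Y$, $[L_\lambda M]=(\partial+\lambda)M$, $[Y_\lambda Y]=(\partial+2\lambda)M$, $[L_\lambda N]=(\partial+\lambda)N$, $[N_\lambda M]=2M$, $[N_\lambda Y]=Y$. $V(\alpha,\beta,\Delta)=\mathbb{C}[\partial]v_\Delta$ with $L_\lambda v_\Delta=(\partial+\alpha+\Delta\lambda)v_\Delta$, $N_\lambda v_\Delta=\beta v_\Delta$, $M_\lambda v_\Delta=Y_\lambda v_\Delta=0$. An extension of $W$ by $V$ is an exact sequence $0\to V\to E\to W\to0$ of conformal modules; equivalence via a module map of middle terms compatible with identities; trivial means equivalent to the direct sum. $\mathrm{Ext}(W,V)$ is the space of extension cocycles modulo coboundaries. *)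

theory Defs
  imports "HOL-Computational_Algebra.Polynomial"
begin

text \<open>Generators of the Lie conformal algebra SV-tilde (a free C[d]-module with basis L, M, Y, N).\<close>
datatype gen = L | M | N | Y

text \<open>A polynomial in two variables (d, lambda) enters the lambda-action only through evaluation
  of d at a scalar (rule (d a)_nu = - nu a_nu), so the structure polynomials of the lambda-brackets
  are recorded as functions of (d, lambda).  The table lists the given nonzero brackets
  [a_lambda b] = sum_c p_c(d, lambda) c.\<close>
fun sv_table :: "gen \<Rightarrow> gen \<Rightarrow> (gen \<Rightarrow> complex \<Rightarrow> complex \<Rightarrow> complex) option" where
  "sv_table L L = Some (\<lambda>c d l. if c = L then d + 2 * l else 0)"
| "sv_table L Y = Some (\<lambda>c d l. if c = Y then d + 3/2 * l else 0)"
| "sv_table L M = Some (\<lambda>c d l. if c = M then d + l else 0)"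
| "sv_table Y Y = Some (\<lambda>c d l. if c = M then d + 2 * l else 0)"
| "sv_table L N = Some (\<lambda>c d l. if c = N then d + l else 0)"
| "sv_table N M = Some (\<lambda>c d l. if c = M then 2 else 0)"
| "sv_table N Y = Some (\<lambda>c d l. if c = Y then 1 else 0)"
| "sv_table _ _ = None"

text \<open>Full lambda-bracket coefficients, completed by skew-symmetry
  [b_lambda a] = - [a_{-lambda-d} b]; all other brackets vanish.\<close>
definition sv_bracket :: "gen \<Rightarrow> gen \<Rightarrow> gen \<Rightarrow> complex \<Rightarrow> complex \<Rightarrow> complex" where
  "sv_bracket a b c d l =
     (case sv_table a b of Some p \<Rightarrow> p c d l
      | None \<Rightarrow> (case sv_table b a of Some p \<Rightarrow> - p c d (- l - d) | None \<Rightarrow> 0))"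

text \<open>Elements of E = C[d] vbar (+) C[d] v are pairs (pbar, p) meaning pbar(d) vbar + p(d) v.\<close>
type_synonym elt = "complex poly \<times> complex poly"

definition eadd :: "elt \<Rightarrow> elt \<Rightarrow> elt" where
  "eadd x y = (fst x + fst y, snd x + snd y)"

definition escale :: "complex poly \<Rightarrow> elt \<Rightarrow> elt" where
  "escale r x = (r * fst x, r * snd x)"

definition shift :: "complex \<Rightarrow> complex poly \<Rightarrow> complex poly" where
  "shift lam p = pcompose p [:lam, 1:]"

text \<open>Polynomials F in C[d, lambda] are represented as complex poly poly, the outer variable being
  lambda and the coefficients polynomials in d; evl F lam = F(d, lam).\<close>
definition evl :: "complex poly poly \<Rightarrow> complex \<Rightarrow> complex poly" where
  "evl F lam = poly F [:lam:]"

text \<open>Action on the rank-one module V(alpha, beta, Delta): X_lambda v = (coefficient) v.\<close>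
fun vcoef :: "complex \<Rightarrow> complex \<Rightarrow> complex \<Rightarrow> gen \<Rightarrow> complex \<Rightarrow> complex poly" where
  "vcoef alpha beta Delta L lam = [:alpha + Delta * lam, 1:]"
| "vcoef alpha beta Delta N lam = [:beta:]"
| "vcoef alpha beta Delta M lam = 0"
| "vcoef alpha beta Delta Y lam = 0"

text \<open>Cochain data: c L = f, c M = g, c N = k, c Y = h.\<close>
type_synonym cochain = "gen \<Rightarrow> complex poly poly"

text \<open>The lambda-action (at a scalar value lambda) on E, with C[d] vbar = V(alpha, betab, Deltab)
  and quotient V(alpha, beta, Delta), using a_lambda (p(d) e) = p(d+lambda) a_lambda e.\<close>
definition ext_act :: "complex \<Rightarrow> complex \<Rightarrow> complex \<Rightarrow> complex \<Rightarrow> complex \<Rightarrow> cochain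
    \<Rightarrow> gen \<Rightarrow> complex \<Rightarrow> elt \<Rightarrow> elt" where
  "ext_act alpha betab Deltab beta Delta c X lam e =
     (shift lam (fst e) * vcoef alpha betab Deltab X lam + shift lam (snd e) * evl (c X) lam,
      shift lam (snd e) * vcoef alpha beta Delta X lam)"

text \<open>Conformal module axioms for an action on E (lambda-brackets compared at all scalar values
  lambda, mu, which is equivalent to polynomial identity).\<close>
definition conformal_module :: "(gen \<Rightarrow> complex \<Rightarrow> elt \<Rightarrow> elt) \<Rightarrow> bool" where
  "conformal_module act \<longleftrightarrow>
     (\<forall>a lam x y. act a lam (eadd x y) = eadd (act a lam x) (act a lam y)) \<and>
     (\<forall>a lam r x. act a lam (escale r x) = escale (shift lam r) (act a lam x)) \<and>
     (\<forall>a b lam mu x.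
        fst (act a lam (act b mu x)) - fst (act b mu (act a lam x)) =
          (\<Sum>c\<leftarrow>[L, M, N, Y]. smult (sv_bracket a b c (- (lam + mu)) lam) (fst (act c (lam + mu) x))) \<and>
        snd (act a lam (act b mu x)) - snd (act b mu (act a lam x)) =
          (\<Sum>c\<leftarrow>[L, M, N, Y]. smult (sv_bracket a b c (- (lam + mu)) lam) (snd (act c (lam + mu) x))))"

definition ext_equiv :: "(gen \<Rightarrow> complex \<Rightarrow> elt \<Rightarrow> elt) \<Rightarrow> (gen \<Rightarrow> complex \<Rightarrow> elt \<Rightarrow> elt) \<Rightarrow> bool" where
  "ext_equiv act1 act2 \<longleftrightarrow>
     (\<exists>phi :: elt \<Rightarrow> elt.
        (\<forall>x y. phi (eadd x y) = eadd (phi x) (phi y)) \<and>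
        (\<forall>r x. phi (escale r x) = escale r (phi x)) \<and>
        (\<forall>p. phi (p, 0) = (p, 0)) \<and>
        (\<forall>x. snd (phi x) = snd x) \<and>
        (\<forall>a lam x. phi (act1 a lam x) = act2 a lam (phi x)))"

definition is_cocycle :: "complex \<Rightarrow> complex \<Rightarrow> complex \<Rightarrow> complex \<Rightarrow> complex \<Rightarrow> cochain \<Rightarrow> bool" where
  "is_cocycle alpha betab Deltab beta Delta c \<longleftrightarrow>
     conformal_module (ext_act alpha betab Deltab beta Delta c)"

definition is_coboundary :: "complex \<Rightarrow> complex \<Rightarrow> complex \<Rightarrow> complex \<Rightarrow> complex \<Rightarrow> cochain \<Rightarrow> bool" where
  "is_coboundary alpha betab Deltab beta Delta c \<longleftrightarrow>
     is_cocycle alpha betab Deltab beta Delta c \<and>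
     ext_equiv (ext_act alpha betab Deltab beta Delta c) (ext_act alpha betab Deltab beta Delta (\<lambda>_. 0))"

definition nontrivial_ext :: "complex \<Rightarrow> complex \<Rightarrow> complex \<Rightarrow> complex \<Rightarrow> complex \<Rightarrow> cochain \<Rightarrow> bool" where
  "nontrivial_ext alpha betab Deltab beta Delta c \<longleftrightarrow>
     is_cocycle alpha betab Deltab beta Delta c \<and> \<not> is_coboundary alpha betab Deltab beta Delta c"

definition equiv_ext :: "complex \<Rightarrow> complex \<Rightarrow> complex \<Rightarrow> complex \<Rightarrow> complex \<Rightarrow> cochain \<Rightarrow> cochain \<Rightarrow> bool" where
  "equiv_ext alpha betab Deltab beta Delta c c' \<longleftrightarrow>
     ext_equiv (ext_act alpha betab Deltab beta Delta c) (ext_act alpha betab Deltab beta Delta c')"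

definition ext_dim_one :: "complex \<Rightarrow> complex \<Rightarrow> complex \<Rightarrow> complex \<Rightarrow> complex \<Rightarrow> bool" where
  "ext_dim_one alpha betab Deltab beta Delta \<longleftrightarrow>
     (\<exists>c0. is_cocycle alpha betab Deltab beta Delta c0 \<and> \<not> is_coboundary alpha betab Deltab beta Delta c0 \<and>
        (\<forall>c. is_cocycle alpha betab Deltab beta Delta c \<longrightarrow>
           (\<exists>t::complex. is_coboundary alpha betab Deltab beta Delta (\<lambda>X. c X - smult [:t:] (c0 X)))))"

definition data_i :: "complex \<Rightarrow> cochain" where
  "data_i a0 = (\<lambda>X. if X = Y then [:[:a0:]:] else 0)"

definition data_ii :: "complex \<Rightarrow> complex \<Rightarrow> complex \<Rightarrow> cochain" where
  "data_ii alpha betab a1 = (\<lambda>X. if X = Y then [: [:a1 * alpha, a1:], [:a1 * betab:] :] else 0)"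

end

(*
  The cocycle conditions for the pairs (N, M), (N, N) and (L, N) say that
  g = 0 and that f, k form the coboundary of the base change v -> v + q(d) v_bar with q = k(d, 0);
  since Y acts by 0 on both V's, h is untouched by base changes, so a cocycle is determined up to
  equivalence by h, and it is trivial iff h = 0.  The pair (N, Y) expresses h through
  h0 = h(d, 0), and the pair (L, Y) then turns into the functional equation
  h0(d + lambda) (d + alpha + (Deltab - betab/2) lambda) = h0(d) (d + alpha + (Delta - beta/2) lambda),
  whose polynomial solutions are a0 + a1 (d + alpha) with a0 = 0 unless Delta - Deltab = -1/2 and
  a1 = 0 unless (Delta, Deltab) = ((betab + 1)/2, betab/2).  Conversely both candidate values of h
  are cocycles, which gives existence, the normal forms and the one-dimensionality of Ext.
*)
theory Submission
  imports Defs
begin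

text \<open>All polynomial identities are checked pointwise: \<open>ceval c X lam z\<close> is the value of
  the cochain component \<open>c X\<close> at \<open>(d, lambda) = (z, lam)\<close>.\<close>

definition ceval :: "cochain \<Rightarrow> gen \<Rightarrow> complex \<Rightarrow> complex \<Rightarrow> complex" where
  "ceval c X lam z = poly (evl (c X) lam) z"

lemma ceval_diff_smult [simp]:
  "ceval (\<lambda>X. c X - smult [:t:] (c' X)) X lam z = ceval c X lam z - t * ceval c' X lam z"
  by (simp add: ceval_def evl_def)

lemma ceval_zero [simp]: "ceval (\<lambda>_. 0) X lam z = 0"
  by (simp add: ceval_def evl_def)

lemma ceval_data_i: "ceval (data_i a0) X lam z = (if X = Y then a0 else 0)"
  by (simp add: data_i_def ceval_def evl_def)

lemma ceval_data_ii:
  "ceval (data_ii alpha betab a1) X lam z = (if X = Y then a1 * (z + alpha + betab * lam) else 0)"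
  by (simp add: data_ii_def ceval_def evl_def algebra_simps)

lemma poly_vcoef_bracket:
  "poly (vcoef alpha beta Delta b mu) (z + lam) * poly (vcoef alpha beta Delta a lam) z
     - poly (vcoef alpha beta Delta a lam) (z + mu) * poly (vcoef alpha beta Delta b mu) z
   = (\<Sum>x\<leftarrow>[L, M, N, Y]. sv_bracket a b x (- (lam + mu)) lam * poly (vcoef alpha beta Delta x (lam + mu)) z)"
  by (cases a; cases b; simp add: sv_bracket_def algebra_simps)

lemma poly_fst_ext_act:
  "poly (fst (ext_act alpha betab Deltab beta Delta c X lam e)) z =
     poly (fst e) (z + lam) * poly (vcoef alpha betab Deltab X lam) z + poly (snd e) (z + lam) * ceval c X lam z"
  by (simp add: ext_act_def shift_def poly_pcompose ceval_def add.commute)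

lemma poly_snd_ext_act:
  "poly (snd (ext_act alpha betab Deltab beta Delta c X lam e)) z =
     poly (snd e) (z + lam) * poly (vcoef alpha beta Delta X lam) z"
  by (simp add: ext_act_def shift_def poly_pcompose add.commute)

lemma ext_act_eadd:
  "ext_act alpha betab Deltab beta Delta c X lam (eadd x y) =
     eadd (ext_act alpha betab Deltab beta Delta c X lam x) (ext_act alpha betab Deltab beta Delta c X lam y)"
  by (simp add: ext_act_def eadd_def shift_def pcompose_add algebra_simps)

lemma ext_act_escale:
  "ext_act alpha betab Deltab beta Delta c X lam (escale r x) =
     escale (shift lam r) (ext_act alpha betab Deltab beta Delta c X lam x)"
  by (simp add: ext_act_def escale_def shift_def pcompose_mult algebra_simps)

lemma poly_sum_list_smult:
  "poly (\<Sum>x\<leftarrow>xs. smult (f x) (p x)) z = (\<Sum>x\<leftarrow>xs. f x * poly (p x) z)"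
  by (induction xs) simp_all

lemma shift_equation_solutions:
  fixes g :: "complex poly" and alpha c1 c2 :: complex
  assumes eq: "\<And>z lam. poly g (z + lam) * (z + alpha + c1 * lam) = poly g z * (z + alpha + c2 * lam)"
  obtains a0 a1 where "\<And>s. poly g s = a0 + a1 * (s + alpha)"
    and "a0 \<noteq> 0 \<Longrightarrow> c1 = c2" and "a1 \<noteq> 0 \<Longrightarrow> c1 = 0 \<and> c2 = 1"
proof (cases "c1 = 0")
  case False
  define a where "a = poly g (- alpha)"
  have "smult c1 g * [:alpha, 1:] = [:c2 * a:] * [:alpha, 1:]"
  proof (rule poly_eq_poly_eq_iff[THEN iffD1, OF ext])
    fix s
    show "poly (smult c1 g * [:alpha, 1:]) s = poly ([:c2 * a:] * [:alpha, 1:]) s"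
      using eq[of "- alpha" "s + alpha"] unfolding a_def by (simp add: algebra_simps)
  qed
  moreover have "[:alpha, 1:] \<noteq> 0" by simp
  ultimately have "smult c1 g = [:c2 * a:]"
    by (metis mult_right_cancel)
  then have "poly (smult c1 g) s = poly [:c2 * a:] s" for s
    by simp
  then have scaled: "c1 * poly g s = c2 * a" for s
    by simp
  then have "c1 * poly g s = c1 * a" for s
    using scaled[of "- alpha"] by (simp add: a_def)
  then have g: "poly g s = a" for s
    using False by simp
  show ?thesis
  proof (rule that[of a 0])
    show "c1 = c2" if "a \<noteq> 0"
      using scaled[of "- alpha"] that by (simp add: a_def)
  qed (simp_all add: g)
next
  case True
  define A where "A = poly g (1 - alpha)"
  have g: "poly g s = A * (1 - c2) + A * c2 * (s + alpha)" for s
    using eq[of "1 - alpha" "s - 1 + alpha"] True unfolding A_def by (simp add: algebra_simps)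
  have "poly g (- alpha) * c2 = 0"
    using eq[of "- alpha" 1] True by simp
  then have "A * (1 - c2) * c2 = 0"
    using g[of "- alpha"] by simp
  then show ?thesis
    using g True by (intro that[of "A * (1 - c2)" "A * c2"]) auto
qed

lemma special_weights_distinct:
  fixes Delta Deltab betab :: complex
  assumes "Delta - Deltab = - 1/2"
  shows "(Delta, Deltab) \<noteq> ((betab + 1) / 2, betab / 2)"
  using assms by (auto simp: field_simps)

context
  fixes alpha betab Deltab beta Delta :: complex
begin

abbreviation act :: "cochain \<Rightarrow> gen \<Rightarrow> complex \<Rightarrow> elt \<Rightarrow> elt" where
  "act c \<equiv> ext_act alpha betab Deltab beta Delta c"

text \<open>The \<open>v_bar\<close>-coefficient of \<open>[a_lam, b_mu] v - [a_lam b]_(lam+mu) v\<close>, evaluated at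
  \<open>d = z\<close>; the cocycle condition is its vanishing.\<close>

definition cocycle_defect :: "cochain \<Rightarrow> gen \<Rightarrow> gen \<Rightarrow> complex \<Rightarrow> complex \<Rightarrow> complex \<Rightarrow> complex" where
  "cocycle_defect c a b lam mu z =
     ceval c b mu (z + lam) * poly (vcoef alpha betab Deltab a lam) z
     + poly (vcoef alpha beta Delta b mu) (z + lam) * ceval c a lam z
     - ceval c a lam (z + mu) * poly (vcoef alpha betab Deltab b mu) z
     - poly (vcoef alpha beta Delta a lam) (z + mu) * ceval c b mu z
     - (\<Sum>x\<leftarrow>[L, M, N, Y]. sv_bracket a b x (- (lam + mu)) lam * ceval c x (lam + mu) z)"

lemma poly_fst_act_bracket:
  "poly (fst (act c a lam (act c b mu e)) - fst (act c b mu (act c a lam e))) z =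
     poly (\<Sum>x\<leftarrow>[L, M, N, Y]. smult (sv_bracket a b x (- (lam + mu)) lam) (fst (act c x (lam + mu) e))) z
     + poly (snd e) (z + lam + mu) * cocycle_defect c a b lam mu z"
  using poly_vcoef_bracket[of alpha betab Deltab b mu z lam a]
  unfolding poly_diff poly_sum_list_smult poly_fst_ext_act poly_snd_ext_act cocycle_defect_def
  by (simp add: algebra_simps)

lemma snd_act_bracket:
  "snd (act c a lam (act c b mu e)) - snd (act c b mu (act c a lam e)) =
     (\<Sum>x\<leftarrow>[L, M, N, Y]. smult (sv_bracket a b x (- (lam + mu)) lam) (snd (act c x (lam + mu) e)))"
proof (rule poly_eq_poly_eq_iff[THEN iffD1], rule ext)
  fix z
  show "poly (snd (act c a lam (act c b mu e)) - snd (act c b mu (act c a lam e))) z =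
     poly (\<Sum>x\<leftarrow>[L, M, N, Y]. smult (sv_bracket a b x (- (lam + mu)) lam) (snd (act c x (lam + mu) e))) z"
    using poly_vcoef_bracket[of alpha beta Delta b mu z lam a]
    unfolding poly_diff poly_sum_list_smult poly_snd_ext_act by (simp add: algebra_simps)
qed

lemma is_cocycle_iff_defect:
  "is_cocycle alpha betab Deltab beta Delta c \<longleftrightarrow> (\<forall>a b lam mu z. cocycle_defect c a b lam mu z = 0)"
proof
  assume "is_cocycle alpha betab Deltab beta Delta c"
  then have bracket: "fst (act c a lam (act c b mu e)) - fst (act c b mu (act c a lam e)) =
      (\<Sum>x\<leftarrow>[L, M, N, Y]. smult (sv_bracket a b x (- (lam + mu)) lam) (fst (act c x (lam + mu) e)))"
    for a b lam mu e
    unfolding is_cocycle_def conformal_module_def by blast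
  show "\<forall>a b lam mu z. cocycle_defect c a b lam mu z = 0"
  proof (intro allI)
    fix a b lam mu z
    from bracket[of a lam b mu "(0, 1)"] poly_fst_act_bracket[of c a lam b mu "(0, 1)" z]
    show "cocycle_defect c a b lam mu z = 0" by simp
  qed
next
  assume "\<forall>a b lam mu z. cocycle_defect c a b lam mu z = 0"
  then have "poly (fst (act c a lam (act c b mu e)) - fst (act c b mu (act c a lam e))) z =
      poly (\<Sum>x\<leftarrow>[L, M, N, Y]. smult (sv_bracket a b x (- (lam + mu)) lam) (fst (act c x (lam + mu) e))) z"
    for a b lam mu e z
    using poly_fst_act_bracket[of c a lam b mu e z] by simp
  then have "fst (act c a lam (act c b mu e)) - fst (act c b mu (act c a lam e)) =
      (\<Sum>x\<leftarrow>[L, M, N, Y]. smult (sv_bracket a b x (- (lam + mu)) lam) (fst (act c x (lam + mu) e)))"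
    for a b lam mu e
    by (intro poly_eq_poly_eq_iff[THEN iffD1] ext)
  then show "is_cocycle alpha betab Deltab beta Delta c"
    unfolding is_cocycle_def conformal_module_def
    by (intro conjI allI ext_act_eadd ext_act_escale snd_act_bracket)
qed

text \<open>The cochain produced by the base change \<open>v \<mapsto> v + q(d) v_bar\<close>.\<close>

definition coboundary_eval :: "complex poly \<Rightarrow> gen \<Rightarrow> complex \<Rightarrow> complex \<Rightarrow> complex" where
  "coboundary_eval q X lam z =
     poly q (z + lam) * poly (vcoef alpha betab Deltab X lam) z - poly (vcoef alpha beta Delta X lam) z * poly q z"

definition cohomologous :: "cochain \<Rightarrow> cochain \<Rightarrow> bool" where
  "cohomologous c c' \<longleftrightarrow> (\<exists>q. \<forall>X lam z. ceval c X lam z - ceval c' X lam z = coboundary_eval q X lam z)"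

lemma coboundary_eval_Y [simp]: "coboundary_eval q Y lam z = 0"
  by (simp add: coboundary_eval_def)

lemma ext_equiv_imp_cohomologous:
  assumes "ext_equiv (act c) (act c')"
  shows "cohomologous c c'"
proof -
  obtain phi :: "elt \<Rightarrow> elt" where
    add: "\<And>x y. phi (eadd x y) = eadd (phi x) (phi y)" and
    scale: "\<And>r x. phi (escale r x) = escale r (phi x)" and
    sub: "\<And>p. phi (p, 0) = (p, 0)" and
    quot: "\<And>x. snd (phi x) = snd x" and
    hom: "\<And>a lam x. phi (act c a lam x) = act c' a lam (phi x)"
    using assms unfolding ext_equiv_def by blast
  define q where "q = fst (phi (0, 1))"
  have phi_gen: "phi (0, 1) = (q, 1)"
    using quot[of "(0, 1)"] unfolding q_def by (metis prod.collapse snd_conv)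
  have phi_eq: "phi x = (fst x + snd x * q, snd x)" for x
  proof -
    have "x = eadd (fst x, 0) (escale (snd x) (0, 1))" by (simp add: eadd_def escale_def)
    then have "phi x = eadd (phi (fst x, 0)) (escale (snd x) (phi (0, 1)))" by (metis add scale)
    then show ?thesis using sub phi_gen by (simp add: eadd_def escale_def)
  qed
  have "ceval c X lam z - ceval c' X lam z = coboundary_eval q X lam z" for X lam z
  proof -
    have "poly (fst (phi (act c X lam (0, 1)))) z = poly (fst (act c' X lam (q, 1))) z"
      using hom phi_gen by simp
    then show ?thesis
      by (simp add: phi_eq poly_fst_ext_act poly_snd_ext_act coboundary_eval_def algebra_simps)
  qed
  then show ?thesis unfolding cohomologous_def by blast
qed

lemma cohomologous_imp_ext_equiv:
  assumes "cohomologous c c'"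
  shows "ext_equiv (act c) (act c')"
proof -
  obtain q where hq: "\<And>X lam z. ceval c X lam z - ceval c' X lam z = coboundary_eval q X lam z"
    using assms unfolding cohomologous_def by blast
  define phi :: "elt \<Rightarrow> elt" where "phi x = (fst x + snd x * q, snd x)" for x
  have "fst (phi (act c a lam x)) = fst (act c' a lam (phi x))" for a lam x
  proof (rule poly_eq_poly_eq_iff[THEN iffD1], rule ext)
    fix z
    show "poly (fst (phi (act c a lam x))) z = poly (fst (act c' a lam (phi x))) z"
      using hq[of a lam z]
      by (simp add: phi_def poly_fst_ext_act poly_snd_ext_act coboundary_eval_def) algebra
  qed
  moreover have "snd (phi (act c a lam x)) = snd (act c' a lam (phi x))" for a lam x
    by (simp add: phi_def ext_act_def)
  ultimately have "phi (act c a lam x) = act c' a lam (phi x)" for a lam x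
    by (simp add: prod_eq_iff)
  then show ?thesis
    unfolding ext_equiv_def
    by (intro exI[of _ phi]) (simp add: phi_def eadd_def escale_def algebra_simps)
qed

lemma ext_equiv_iff_cohomologous: "ext_equiv (act c) (act c') \<longleftrightarrow> cohomologous c c'"
  using ext_equiv_imp_cohomologous cohomologous_imp_ext_equiv by blast

lemma coboundary_eval_diff:
  "coboundary_eval (q - q') X lam z = coboundary_eval q X lam z - coboundary_eval q' X lam z"
  by (simp add: coboundary_eval_def algebra_simps)

lemma cocycle_defect_diff_smult:
  "cocycle_defect (\<lambda>X. c X - smult [:t:] (c' X)) a b lam mu z =
     cocycle_defect c a b lam mu z - t * cocycle_defect c' a b lam mu z"
  by (simp add: cocycle_defect_def algebra_simps)

lemma is_cocycle_diff_smult: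
  assumes "is_cocycle alpha betab Deltab beta Delta c" and "is_cocycle alpha betab Deltab beta Delta c'"
  shows "is_cocycle alpha betab Deltab beta Delta (\<lambda>X. c X - smult [:t:] (c' X))"
  using assms by (simp add: is_cocycle_iff_defect cocycle_defect_diff_smult)

lemma is_cocycle_zero: "is_cocycle alpha betab Deltab beta Delta (\<lambda>_. 0)"
  by (simp add: is_cocycle_iff_defect cocycle_defect_def)

context
  assumes betab_beta: "betab - beta = 1"
begin

lemma cocycle_relations:
  assumes "is_cocycle alpha betab Deltab beta Delta c"
  shows "ceval c M lam z = 0"
    and "ceval c N lam z = betab * ceval c N 0 (z + lam) - beta * ceval c N 0 z"
    and "ceval c L lam z = ceval c N 0 (z + lam) * (z + alpha + Deltab * lam) - (z + alpha + Delta * lam) * ceval c N 0 z"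
    and "ceval c Y lam z = betab * ceval c Y 0 (z + lam) - beta * ceval c Y 0 z"
    and "ceval c Y 0 (z + lam) * (z + alpha + Deltab * lam) - (z + alpha + Delta * lam) * ceval c Y 0 z
           = lam / 2 * ceval c Y lam z"
proof -
  have defect: "cocycle_defect c a b l m w = 0" for a b l m w
    using assms is_cocycle_iff_defect by blast
  have beta: "beta = betab - 1"
    using betab_beta by (simp add: algebra_simps)
  from defect[of N M 0 lam z, unfolded cocycle_defect_def] show "ceval c M lam z = 0"
    by (simp add: sv_bracket_def beta algebra_simps)
  from defect[of N N lam 0 z, unfolded cocycle_defect_def]
  show "ceval c N lam z = betab * ceval c N 0 (z + lam) - beta * ceval c N 0 z"
    by (simp add: sv_bracket_def beta algebra_simps)
  from defect[of L N lam 0 z, unfolded cocycle_defect_def]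
  show "ceval c L lam z = ceval c N 0 (z + lam) * (z + alpha + Deltab * lam) - (z + alpha + Delta * lam) * ceval c N 0 z"
    by (simp add: sv_bracket_def beta algebra_simps)
  from defect[of N Y lam 0 z, unfolded cocycle_defect_def]
  show "ceval c Y lam z = betab * ceval c Y 0 (z + lam) - beta * ceval c Y 0 z"
    by (simp add: sv_bracket_def beta algebra_simps)
  from defect[of L Y lam 0 z, unfolded cocycle_defect_def]
  show "ceval c Y 0 (z + lam) * (z + alpha + Deltab * lam) - (z + alpha + Delta * lam) * ceval c Y 0 z
           = lam / 2 * ceval c Y lam z"
    by (simp add: sv_bracket_def algebra_simps)
qed

lemma cocycle_off_Y:
  assumes "is_cocycle alpha betab Deltab beta Delta c" and "X \<noteq> Y"
  shows "ceval c X lam z = coboundary_eval (evl (c N) 0) X lam z"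
  using cocycle_relations[OF assms(1), where lam = lam and z = z] assms(2)
  by (cases X) (simp_all add: coboundary_eval_def ceval_def algebra_simps)

lemma cocycle_Y_affine:
  assumes "is_cocycle alpha betab Deltab beta Delta c"
  obtains a0 a1 where "\<And>lam z. ceval c Y lam z = a0 + a1 * (z + alpha + betab * lam)"
    and "a0 \<noteq> 0 \<Longrightarrow> Delta - Deltab = - 1/2"
    and "a1 \<noteq> 0 \<Longrightarrow> (Delta, Deltab) = ((betab + 1) / 2, betab / 2)"
proof -
  let ?g = "evl (c Y) 0"
  have "poly ?g (z + lam) * (z + alpha + (Deltab - betab / 2) * lam) =
        poly ?g z * (z + alpha + (Delta - beta / 2) * lam)" for z lam
    using cocycle_relations(5)[OF assms, where lam = lam and z = z,
        unfolded cocycle_relations(4)[OF assms, where lam = lam and z = z]]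
    by (simp add: ceval_def field_simps) algebra
  then obtain a0 a1 where g: "\<And>s. poly ?g s = a0 + a1 * (s + alpha)"
    and a0: "a0 \<noteq> 0 \<Longrightarrow> Deltab - betab / 2 = Delta - beta / 2"
    and a1: "a1 \<noteq> 0 \<Longrightarrow> Deltab - betab / 2 = 0 \<and> Delta - beta / 2 = 1"
    by (rule shift_equation_solutions) blast
  have beta: "beta = betab - 1"
    using betab_beta by (simp add: algebra_simps)
  show ?thesis
  proof (rule that[of a0 a1])
    show "ceval c Y lam z = a0 + a1 * (z + alpha + betab * lam)" for lam z
      using cocycle_relations(4)[OF assms, where lam = lam and z = z] g by (simp add: ceval_def beta algebra_simps)
    show "Delta - Deltab = - 1/2" if "a0 \<noteq> 0"
      using a0[OF that] by (simp add: beta field_simps)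
    show "(Delta, Deltab) = ((betab + 1) / 2, betab / 2)" if "a1 \<noteq> 0"
      using a1[OF that] by (simp add: beta field_simps)
  qed
qed

lemma equiv_ext_iff_Y_eq:
  assumes c: "is_cocycle alpha betab Deltab beta Delta c" and c': "is_cocycle alpha betab Deltab beta Delta c'"
  shows "equiv_ext alpha betab Deltab beta Delta c c' \<longleftrightarrow> (\<forall>lam z. ceval c Y lam z = ceval c' Y lam z)"
proof
  assume "equiv_ext alpha betab Deltab beta Delta c c'"
  then obtain q where "\<And>X lam z. ceval c X lam z - ceval c' X lam z = coboundary_eval q X lam z"
    unfolding equiv_ext_def ext_equiv_iff_cohomologous cohomologous_def by blast
  from this[of Y] show "\<forall>lam z. ceval c Y lam z = ceval c' Y lam z"
    by (simp add: right_minus_eq)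
next
  assume Y_eq: "\<forall>lam z. ceval c Y lam z = ceval c' Y lam z"
  have "ceval c X lam z - ceval c' X lam z = coboundary_eval (evl (c N) 0 - evl (c' N) 0) X lam z"
    for X lam z
    using Y_eq cocycle_off_Y[OF c] cocycle_off_Y[OF c'] by (cases "X = Y") (simp_all add: coboundary_eval_diff)
  then show "equiv_ext alpha betab Deltab beta Delta c c'"
    unfolding equiv_ext_def ext_equiv_iff_cohomologous cohomologous_def by blast
qed

lemma is_coboundary_iff_Y_zero:
  assumes "is_cocycle alpha betab Deltab beta Delta c"
  shows "is_coboundary alpha betab Deltab beta Delta c \<longleftrightarrow> (\<forall>lam z. ceval c Y lam z = 0)"
  using equiv_ext_iff_Y_eq[OF assms is_cocycle_zero] assms
  by (simp add: is_coboundary_def equiv_ext_def)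

lemma nontrivial_ext_iff_Y_nonzero:
  "nontrivial_ext alpha betab Deltab beta Delta c \<longleftrightarrow>
     is_cocycle alpha betab Deltab beta Delta c \<and> (\<exists>lam z. ceval c Y lam z \<noteq> 0)"
  using is_coboundary_iff_Y_zero by (auto simp: nontrivial_ext_def)

lemma is_cocycle_data_i:
  assumes "Delta - Deltab = - 1/2"
  shows "is_cocycle alpha betab Deltab beta Delta (data_i a0)"
  unfolding is_cocycle_iff_defect
proof (intro allI)
  have beta: "beta = betab - 1" and Delta: "Delta = Deltab - 1/2"
    using betab_beta assms by (simp_all add: algebra_simps)
  show "cocycle_defect (data_i a0) a b lam mu z = 0" for a b lam mu z
    unfolding cocycle_defect_def
    by (cases a; cases b) (simp_all add: sv_bracket_def ceval_data_i beta Delta algebra_simps)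
qed

lemma is_cocycle_data_ii:
  assumes "(Delta, Deltab) = ((betab + 1) / 2, betab / 2)"
  shows "is_cocycle alpha betab Deltab beta Delta (data_ii alpha betab a1)"
  unfolding is_cocycle_iff_defect
proof (intro allI)
  have beta: "beta = betab - 1" and Delta: "Delta = (betab + 1) / 2" and Deltab: "Deltab = betab / 2"
    using betab_beta assms by (simp_all add: algebra_simps)
  show "cocycle_defect (data_ii alpha betab a1) a b lam mu z = 0" for a b lam mu z
    unfolding cocycle_defect_def
    by (cases a; cases b) (simp_all add: sv_bracket_def ceval_data_ii beta Delta Deltab algebra_simps add_divide_distrib)
qed

lemma ext_spanned_by_family:
  fixes d :: "complex \<Rightarrow> cochain" and e :: "complex \<Rightarrow> complex \<Rightarrow> complex"
  assumes cocycle_d: "\<And>t. is_cocycle alpha betab Deltab beta Delta (d t)"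
    and Y_d: "\<And>t lam z. ceval (d t) Y lam z = t * e lam z"
    and e_nonzero: "e lam0 z0 \<noteq> 0"
    and Y_cocycle: "\<And>c. is_cocycle alpha betab Deltab beta Delta c \<Longrightarrow> \<exists>t. \<forall>lam z. ceval c Y lam z = t * e lam z"
  shows "\<forall>t. t \<noteq> 0 \<longrightarrow> nontrivial_ext alpha betab Deltab beta Delta (d t)"
    and "\<forall>c. nontrivial_ext alpha betab Deltab beta Delta c \<longrightarrow>
           (\<exists>t. t \<noteq> 0 \<and> equiv_ext alpha betab Deltab beta Delta c (d t))"
    and "ext_dim_one alpha betab Deltab beta Delta"
proof -
  show "\<forall>t. t \<noteq> 0 \<longrightarrow> nontrivial_ext alpha betab Deltab beta Delta (d t)"
    using cocycle_d Y_d e_nonzero by (auto simp: nontrivial_ext_iff_Y_nonzero)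
  show "\<forall>c. nontrivial_ext alpha betab Deltab beta Delta c \<longrightarrow>
           (\<exists>t. t \<noteq> 0 \<and> equiv_ext alpha betab Deltab beta Delta c (d t))"
  proof (intro allI impI)
    fix c
    assume nontrivial: "nontrivial_ext alpha betab Deltab beta Delta c"
    then have c: "is_cocycle alpha betab Deltab beta Delta c"
      by (simp add: nontrivial_ext_def)
    then obtain t where t: "\<And>lam z. ceval c Y lam z = t * e lam z"
      using Y_cocycle by blast
    have "t \<noteq> 0"
      using nontrivial t by (auto simp: nontrivial_ext_iff_Y_nonzero)
    moreover have "equiv_ext alpha betab Deltab beta Delta c (d t)"
      using equiv_ext_iff_Y_eq[OF c cocycle_d] t Y_d by simp
    ultimately show "\<exists>t. t \<noteq> 0 \<and> equiv_ext alpha betab Deltab beta Delta c (d t)"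
      by blast
  qed
  show "ext_dim_one alpha betab Deltab beta Delta"
    unfolding ext_dim_one_def
  proof (intro exI[of _ "d 1"] conjI allI impI)
    show "is_cocycle alpha betab Deltab beta Delta (d 1)"
      by (rule cocycle_d)
    show "\<not> is_coboundary alpha betab Deltab beta Delta (d 1)"
      using is_coboundary_iff_Y_zero[OF cocycle_d] Y_d[of 1] e_nonzero by auto
    fix c
    assume c: "is_cocycle alpha betab Deltab beta Delta c"
    with Y_cocycle obtain t where "\<forall>lam z. ceval c Y lam z = t * e lam z"
      by blast
    then have "is_coboundary alpha betab Deltab beta Delta (\<lambda>X. c X - smult [:t:] (d 1 X))"
      using is_coboundary_iff_Y_zero[OF is_cocycle_diff_smult[OF c cocycle_d]] Y_d by simp
    then show "\<exists>t. is_coboundary alpha betab Deltab beta Delta (\<lambda>X. c X - smult [:t:] (d 1 X))"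
      by blast
  qed
qed

lemma ext_case_i:
  assumes "Delta - Deltab = - 1/2"
  shows "\<forall>a0. a0 \<noteq> 0 \<longrightarrow> nontrivial_ext alpha betab Deltab beta Delta (data_i a0)"
    and "\<forall>c. nontrivial_ext alpha betab Deltab beta Delta c \<longrightarrow>
           (\<exists>a0. a0 \<noteq> 0 \<and> equiv_ext alpha betab Deltab beta Delta c (data_i a0))"
    and "ext_dim_one alpha betab Deltab beta Delta"
proof -
  have Y_cocycle: "\<exists>t. \<forall>lam z. ceval c Y lam z = t * 1"
    if c: "is_cocycle alpha betab Deltab beta Delta c" for c
  proof -
    obtain a0 a1 where Y_c: "\<And>lam z. ceval c Y lam z = a0 + a1 * (z + alpha + betab * lam)"
      and "a1 \<noteq> 0 \<Longrightarrow> (Delta, Deltab) = ((betab + 1) / 2, betab / 2)"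
      by (rule cocycle_Y_affine[OF c]) blast
    with assms special_weights_distinct have "a1 = 0" by blast
    with Y_c show ?thesis by auto
  qed
  have Y_data: "ceval (data_i t) Y lam z = t * 1" for t lam z
    by (simp add: ceval_data_i)
  note family = ext_spanned_by_family[of data_i "\<lambda>_ _. 1" 0 0,
      OF is_cocycle_data_i[OF assms] Y_data one_neq_zero Y_cocycle]
  show "\<forall>a0. a0 \<noteq> 0 \<longrightarrow> nontrivial_ext alpha betab Deltab beta Delta (data_i a0)"
    by (rule family(1))
  show "\<forall>c. nontrivial_ext alpha betab Deltab beta Delta c \<longrightarrow>
          (\<exists>a0. a0 \<noteq> 0 \<and> equiv_ext alpha betab Deltab beta Delta c (data_i a0))"
    by (rule family(2))
  show "ext_dim_one alpha betab Deltab beta Delta"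
    by (rule family(3))
qed

lemma ext_case_ii:
  assumes "(Delta, Deltab) = ((betab + 1) / 2, betab / 2)"
  shows "\<forall>a1. a1 \<noteq> 0 \<longrightarrow> nontrivial_ext alpha betab Deltab beta Delta (data_ii alpha betab a1)"
    and "\<forall>c. nontrivial_ext alpha betab Deltab beta Delta c \<longrightarrow>
           (\<exists>a1. a1 \<noteq> 0 \<and> equiv_ext alpha betab Deltab beta Delta c (data_ii alpha betab a1))"
    and "ext_dim_one alpha betab Deltab beta Delta"
proof -
  have Y_cocycle: "\<exists>t. \<forall>lam z. ceval c Y lam z = t * (z + alpha + betab * lam)"
    if c: "is_cocycle alpha betab Deltab beta Delta c" for c
  proof -
    obtain a0 a1 where Y_c: "\<And>lam z. ceval c Y lam z = a0 + a1 * (z + alpha + betab * lam)"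
      and "a0 \<noteq> 0 \<Longrightarrow> Delta - Deltab = - 1/2"
      by (rule cocycle_Y_affine[OF c]) blast
    with assms special_weights_distinct have "a0 = 0" by blast
    with Y_c show ?thesis by auto
  qed
  have Y_data: "ceval (data_ii alpha betab t) Y lam z = t * (z + alpha + betab * lam)" for t lam z
    by (simp add: ceval_data_ii)
  have nonzero: "(1 - alpha) + alpha + betab * 0 \<noteq> 0"
    by simp
  note family = ext_spanned_by_family[of "data_ii alpha betab" "\<lambda>lam z. z + alpha + betab * lam" 0 "1 - alpha",
      OF is_cocycle_data_ii[OF assms] Y_data nonzero Y_cocycle]
  show "\<forall>a1. a1 \<noteq> 0 \<longrightarrow> nontrivial_ext alpha betab Deltab beta Delta (data_ii alpha betab a1)"
    by (rule family(1))
  show "\<forall>c. nontrivial_ext alpha betab Deltab beta Delta c \<longrightarrow>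
          (\<exists>a1. a1 \<noteq> 0 \<and> equiv_ext alpha betab Deltab beta Delta c (data_ii alpha betab a1))"
    by (rule family(2))
  show "ext_dim_one alpha betab Deltab beta Delta"
    by (rule family(3))
qed

lemma no_nontrivial_ext:
  assumes "Delta - Deltab \<noteq> - 1/2" and "(Delta, Deltab) \<noteq> ((betab + 1) / 2, betab / 2)"
  shows "\<not> nontrivial_ext alpha betab Deltab beta Delta c"
proof
  assume nontrivial: "nontrivial_ext alpha betab Deltab beta Delta c"
  then have "is_cocycle alpha betab Deltab beta Delta c"
    by (simp add: nontrivial_ext_def)
  then obtain a0 a1 where Y_c: "\<And>lam z. ceval c Y lam z = a0 + a1 * (z + alpha + betab * lam)"
    and "a0 \<noteq> 0 \<Longrightarrow> Delta - Deltab = - 1/2"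
    and "a1 \<noteq> 0 \<Longrightarrow> (Delta, Deltab) = ((betab + 1) / 2, betab / 2)"
    by (rule cocycle_Y_affine) blast
  with assms have "a0 = 0" and "a1 = 0"
    by auto
  with Y_c nontrivial show False
    by (simp add: nontrivial_ext_iff_Y_nonzero)
qed

end

end

theorem theorem5p8:
  fixes alpha beta betab Delta Deltab :: complex
  assumes "(Delta, beta) \<noteq> (0, 0)"
    and "(Deltab, betab) \<noteq> (0, 0)"
    and "betab - beta = 1"
  shows "((\<exists>c. nontrivial_ext alpha betab Deltab beta Delta c) \<longleftrightarrow>
            (Delta - Deltab = - 1/2 \<or> (Delta, Deltab) = ((betab + 1) / 2, betab / 2)))
       \<and> (Delta - Deltab = - 1/2 \<longrightarrow>
            (\<forall>a0. a0 \<noteq> 0 \<longrightarrow> nontrivial_ext alpha betab Deltab beta Delta (data_i a0)) \<and>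
            (\<forall>c. nontrivial_ext alpha betab Deltab beta Delta c \<longrightarrow>
               (\<exists>a0. a0 \<noteq> 0 \<and> equiv_ext alpha betab Deltab beta Delta c (data_i a0))))
       \<and> ((Delta, Deltab) = ((betab + 1) / 2, betab / 2) \<longrightarrow>
            (\<forall>a1. a1 \<noteq> 0 \<longrightarrow> nontrivial_ext alpha betab Deltab beta Delta (data_ii alpha betab a1)) \<and>
            (\<forall>c. nontrivial_ext alpha betab Deltab beta Delta c \<longrightarrow>
               (\<exists>a1. a1 \<noteq> 0 \<and> equiv_ext alpha betab Deltab beta Delta c (data_ii alpha betab a1))))
       \<and> ((Delta - Deltab = - 1/2 \<or> (Delta, Deltab) = ((betab + 1) / 2, betab / 2)) \<longrightarrow>
            ext_dim_one alpha (beta + 1) Deltab beta Delta)"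
proof -
  note betab_beta = assms(3)
  have beta_succ: "beta + 1 = betab"
    using betab_beta by (simp add: algebra_simps)
  have "(\<exists>c. nontrivial_ext alpha betab Deltab beta Delta c) \<longleftrightarrow>
          (Delta - Deltab = - 1/2 \<or> (Delta, Deltab) = ((betab + 1) / 2, betab / 2))"
  proof
    assume "Delta - Deltab = - 1/2 \<or> (Delta, Deltab) = ((betab + 1) / 2, betab / 2)"
    then show "\<exists>c. nontrivial_ext alpha betab Deltab beta Delta c"
    proof
      assume "Delta - Deltab = - 1/2"
      then have "nontrivial_ext alpha betab Deltab beta Delta (data_i 1)"
        using ext_case_i(1)[OF betab_beta] by simp
      then show ?thesis by blast
    next
      assume "(Delta, Deltab) = ((betab + 1) / 2, betab / 2)"
      then have "nontrivial_ext alpha betab Deltab beta Delta (data_ii alpha betab 1)"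
        using ext_case_ii(1)[OF betab_beta] by simp
      then show ?thesis by blast
    qed
  qed (use no_nontrivial_ext[OF betab_beta] in blast)
  then show ?thesis
    unfolding beta_succ using ext_case_i[OF betab_beta] ext_case_ii[OF betab_beta]
    by (intro conjI impI) auto
qed

end
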